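(* If $N$ is a normal form, i.e. $N$ is generated by the grammar $N ::= xN_1\cdots N_k \mid \lambda x.N \mid \mu\alpha.[\beta]N$ ($k\ge0$), then there exist a basis $\Gamma$, a name context $\Delta$ and $\kappa\in\mathcal{T}_C$ such that $\Gamma\vdash N:\kappa\to\nu\mid\Delta$ is derivable in the intersection type system.
   Context: $\lambda\mu$-terms: $M,N ::= x \mid \lambda x.M \mid MN \mid \mu\alpha.[\beta]M$ over disjoint denumerable sets of term variables and names ($\lambda$ binds $x$, $\mu$ binds $\alpha$; bound and free variables/names assumed distinct). Types: with constant $\nu$ and symbol $\omega$ (not itself a type), $\mathcal{T}_D:\ \delta ::= \nu \mid \omega\to\nu \mid \kappa\to\nu \mid \delta\wedge\delta$; $\mathcal{T}_C:\ \kappa ::= \delta\times\omega \mid \delta\times\kappa \mid \kappa\wedge\kappa$ ($\times$ right-associative). $\le$ is the least preorder on $\mathcal{T}_D$ and on $\mathcal{T}_C$ such that: $\sigma\wedge\tau\le\sigma$; $\sigma\wedge\tau\le\tau$; $\nu\le\omega\to\nu$; $\omega\to\nu\le\nu$; $\delta_1\times\delta_2\times\omega\le\delta_1\times\omega$; $(\delta_1\times\omega)\wedge(\delta_2\times\kappa)\le(\delta_1\wedge\delta_2)\times\kappa$; $(\delta_1\times\kappa_1)\wedge(\delta_2\times\kappa_2)\le(\delta_1\wedge\delta_2)\times(\kappa_1\wedge\kappa_2)$; $\delta_1\le\delta_2\Rightarrow\delta_1\times\omega\le\delta_2\times\omega$; $\delta_1\le\delta_2,\kappa_1\le\kappa_2\Rightarrow\delta_1\times\kappa_1\le\delta_2\times\kappa_2$;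 $\sigma\le\tau_1,\sigma\le\tau_2\Rightarrow\sigma\le\tau_1\wedge\tau_2$; $\kappa_2\le\kappa_1\Rightarrow\kappa_1\to\nu\le\kappa_2\to\nu$. Typing: bases $\Gamma$ (finite maps variables $\to\mathcal{T}_D$), name contexts $\Delta$ (finite maps names $\to\mathcal{T}_C$); judgements $\Gamma\vdash M:\delta\mid\Delta$, with variables of $\Gamma$ and names of $\Delta$ not bound in $M$. Rules: (ax) $\Gamma,x{:}\delta\vdash x:\delta\mid\Delta$; (abs) from $\Gamma,x{:}\delta\vdash M:\kappa\to\nu\mid\Delta$ infer $\Gamma\vdash\lambda x.M:\delta\times\kappa\to\nu\mid\Delta$; (app) from $\Gamma\vdash M:\delta\times\kappa\to\nu\mid\Delta$ and $\Gamma\vdash N:\delta\mid\Delta$ infer $\Gamma\vdash MN:\kappa\to\nu\mid\Delta$ ($\kappa\in\mathcal{T}_C$ or $\kappa=\omega$); ($\mu$) from $\Gamma\vdash M:\kappa'\to\nu\mid\alpha{:}\kappa,\beta{:}\kappa',\Delta$ infer $\Gamma\vdash\mu\alpha.[\beta]M:\kappa\to\nu\mid\beta{:}\kappa',\Delta$ ($\beta\neq\alpha$), and from $\Gamma\vdash M:\kappa\to\nu\mid\alpha{:}\kappa,\Delta$ infer $\Gamma\vdash\mu\alpha.[\alpha]M:\kappa\to\nu\mid\Delta$; ($\le$) from $\Gamma\vdash M:\delta\mid\Delta$, $\delta\le\delta'$ infer $\Gamma\vdash M:\delta'\mid\Delta$; ($\wedge$) from $\Gamma\vdash M:\delta\mid\Delta$,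 $\Gamma\vdash M:\delta'\mid\Delta$ infer $\Gamma\vdash M:\delta\wedge\delta'\mid\Delta$. *)

theory Defs
  imports Main
begin

datatype ('v, 'n) trm =
    Var 'v
  | Lam 'v "('v, 'n) trm"
  | App "('v, 'n) trm" "('v, 'n) trm"
  | Mu 'n 'n "('v, 'n) trm"   \<comment> \<open>Mu a b M  stands for  mu a.[b]M\<close>

fun fvars :: "('v, 'n) trm \<Rightarrow> 'v set" where
  "fvars (Var x) = {x}"
| "fvars (Lam x M) = fvars M - {x}"
| "fvars (App M N) = fvars M \<union> fvars N"
| "fvars (Mu a b M) = fvars M"

fun bvars :: "('v, 'n) trm \<Rightarrow> 'v set" where
  "bvars (Var x) = {}"
| "bvars (Lam x M) = insert x (bvars M)"
| "bvars (App M N) = bvars M \<union> bvars N"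
| "bvars (Mu a b M) = bvars M"

fun fnames :: "('v, 'n) trm \<Rightarrow> 'n set" where
  "fnames (Var x) = {}"
| "fnames (Lam x M) = fnames M"
| "fnames (App M N) = fnames M \<union> fnames N"
| "fnames (Mu a b M) = insert b (fnames M) - {a}"

fun bnames :: "('v, 'n) trm \<Rightarrow> 'n set" where
  "bnames (Var x) = {}"
| "bnames (Lam x M) = bnames M"
| "bnames (App M N) = bnames M \<union> bnames N"
| "bnames (Mu a b M) = insert a (bnames M)"

fun nested_distinct :: "('v, 'n) trm \<Rightarrow> bool" where
  "nested_distinct (Var x) = True"
| "nested_distinct (Lam x M) = (x \<notin> bvars M \<and> nested_distinct M)"
| "nested_distinct (App M N) = (nested_distinct M \<and> nested_distinct N)"
| "nested_distinct (Mu a b M) = (a \<notin> bnames M \<and> nested_distinct M)"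

definition var_convention :: "('v, 'n) trm \<Rightarrow> bool" where
  "var_convention M \<longleftrightarrow> bvars M \<inter> fvars M = {} \<and> bnames M \<inter> fnames M = {}
     \<and> nested_distinct M"

inductive normal_form :: "('v, 'n) trm \<Rightarrow> bool" where
  nf_head: "(\<forall>N \<in> set Ns. normal_form N) \<Longrightarrow> normal_form (foldl App (Var x) Ns)"
| nf_lam: "normal_form N \<Longrightarrow> normal_form (Lam x N)"
| nf_mu: "normal_form N \<Longrightarrow> normal_form (Mu a b N)"

text \<open>dtype = T_D, ctype = T_C. Nu = nu; ArrW = omega->nu; Arr k = k->nu;
  ProdW d = d x omega; Prod d k = d x k.\<close>
datatype dtype = Nu | ArrW | Arr ctype | DAnd dtype dtype
     and ctype = ProdW dtype | Prod dtype ctype | CAnd ctype ctype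

inductive leD :: "dtype \<Rightarrow> dtype \<Rightarrow> bool"
  and leC :: "ctype \<Rightarrow> ctype \<Rightarrow> bool" where
  leD_refl: "leD d d"
| leD_trans: "leD d1 d2 \<Longrightarrow> leD d2 d3 \<Longrightarrow> leD d1 d3"
| leC_refl: "leC k k"
| leC_trans: "leC k1 k2 \<Longrightarrow> leC k2 k3 \<Longrightarrow> leC k1 k3"
| leD_and1: "leD (DAnd d1 d2) d1"
| leD_and2: "leD (DAnd d1 d2) d2"
| leC_and1: "leC (CAnd k1 k2) k1"
| leC_and2: "leC (CAnd k1 k2) k2"
| leD_nu_arrw: "leD Nu ArrW"
| leD_arrw_nu: "leD ArrW Nu"
| leC_drop: "leC (Prod d1 (ProdW d2)) (ProdW d1)"
| leC_and_prodW: "leC (CAnd (ProdW d1) (Prod d2 k)) (Prod (DAnd d1 d2) k)"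
| leC_and_prod: "leC (CAnd (Prod d1 k1) (Prod d2 k2)) (Prod (DAnd d1 d2) (CAnd k1 k2))"
| leC_mono_prodW: "leD d1 d2 \<Longrightarrow> leC (ProdW d1) (ProdW d2)"
| leC_mono_prod: "leD d1 d2 \<Longrightarrow> leC k1 k2 \<Longrightarrow> leC (Prod d1 k1) (Prod d2 k2)"
| leD_glb: "leD d d1 \<Longrightarrow> leD d d2 \<Longrightarrow> leD d (DAnd d1 d2)"
| leC_glb: "leC k k1 \<Longrightarrow> leC k k2 \<Longrightarrow> leC k (CAnd k1 k2)"
| leD_arr: "leC k2 k1 \<Longrightarrow> leD (Arr k1) (Arr k2)"

type_synonym 'v basis = "'v \<rightharpoonup> dtype"
type_synonym 'n namectx = "'n \<rightharpoonup> ctype"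

definition wf_judg :: "'v basis \<Rightarrow> ('v, 'n) trm \<Rightarrow> 'n namectx \<Rightarrow> bool" where
  "wf_judg \<Gamma> M \<Delta> \<longleftrightarrow> finite (dom \<Gamma>) \<and> finite (dom \<Delta>)
     \<and> dom \<Gamma> \<inter> bvars M = {} \<and> dom \<Delta> \<inter> bnames M = {}"

inductive typing :: "'v basis \<Rightarrow> ('v, 'n) trm \<Rightarrow> dtype \<Rightarrow> 'n namectx \<Rightarrow> bool" where
  ty_ax: "\<Gamma> x = Some d \<Longrightarrow> wf_judg \<Gamma> (Var x) \<Delta> \<Longrightarrow> typing \<Gamma> (Var x) d \<Delta>"
| ty_abs: "x \<notin> dom \<Gamma> \<Longrightarrow> typing (\<Gamma>(x \<mapsto> d)) M (Arr k) \<Delta> \<Longrightarrow> wf_judg \<Gamma> (Lam x M) \<Delta>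
           \<Longrightarrow> typing \<Gamma> (Lam x M) (Arr (Prod d k)) \<Delta>"
| ty_absW: "x \<notin> dom \<Gamma> \<Longrightarrow> typing (\<Gamma>(x \<mapsto> d)) M ArrW \<Delta> \<Longrightarrow> wf_judg \<Gamma> (Lam x M) \<Delta>
           \<Longrightarrow> typing \<Gamma> (Lam x M) (Arr (ProdW d)) \<Delta>"
| ty_app: "typing \<Gamma> M (Arr (Prod d k)) \<Delta> \<Longrightarrow> typing \<Gamma> N d \<Delta> \<Longrightarrow> wf_judg \<Gamma> (App M N) \<Delta>
           \<Longrightarrow> typing \<Gamma> (App M N) (Arr k) \<Delta>"
| ty_appW: "typing \<Gamma> M (Arr (ProdW d)) \<Delta> \<Longrightarrow> typing \<Gamma> N d \<Delta> \<Longrightarrow> wf_judg \<Gamma> (App M N) \<Delta>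
           \<Longrightarrow> typing \<Gamma> (App M N) ArrW \<Delta>"
| ty_mu: "\<beta> \<noteq> \<alpha> \<Longrightarrow> \<alpha> \<notin> dom \<Delta> \<Longrightarrow> \<Delta> \<beta> = Some k'
          \<Longrightarrow> typing \<Gamma> M (Arr k') (\<Delta>(\<alpha> \<mapsto> k)) \<Longrightarrow> wf_judg \<Gamma> (Mu \<alpha> \<beta> M) \<Delta>
          \<Longrightarrow> typing \<Gamma> (Mu \<alpha> \<beta> M) (Arr k) \<Delta>"
| ty_mu_same: "\<alpha> \<notin> dom \<Delta> \<Longrightarrow> typing \<Gamma> M (Arr k) (\<Delta>(\<alpha> \<mapsto> k)) \<Longrightarrow> wf_judg \<Gamma> (Mu \<alpha> \<alpha> M) \<Delta>
          \<Longrightarrow> typing \<Gamma> (Mu \<alpha> \<alpha> M) (Arr k) \<Delta>"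
| ty_le: "typing \<Gamma> M d \<Delta> \<Longrightarrow> leD d d' \<Longrightarrow> wf_judg \<Gamma> M \<Delta> \<Longrightarrow> typing \<Gamma> M d' \<Delta>"
| ty_and: "typing \<Gamma> M d \<Delta> \<Longrightarrow> typing \<Gamma> M d' \<Delta> \<Longrightarrow> wf_judg \<Gamma> M \<Delta>
           \<Longrightarrow> typing \<Gamma> M (DAnd d d') \<Delta>"

end

theory Submission
  imports Defs
begin

text \<open>Induction on the normal form, keeping the basis and name context supported on the free
  variables and names of the term. An applied head variable receives exactly the arrow type its
  arguments require; the contexts of the subterms are combined by intersecting the types of shared
  variables and names, which is harmless because typing is monotone in the contexts. For a
  \<open>\<lambda>\<close>- or \<open>\<mu>\<close>-abstraction the bound variable or name is discharged with its type in the body's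
  context (or an arbitrary one if it does not occur free).\<close>

definition ctx_refines :: "('b \<Rightarrow> 'b \<Rightarrow> bool) \<Rightarrow> ('a \<rightharpoonup> 'b) \<Rightarrow> ('a \<rightharpoonup> 'b) \<Rightarrow> bool" where
  "ctx_refines R G' G \<longleftrightarrow> (\<forall>x b. G x = Some b \<longrightarrow> (\<exists>b'. G' x = Some b' \<and> R b' b))"

lemma ctx_refines_refl: "(\<And>b. R b b) \<Longrightarrow> ctx_refines R G G"
  unfolding ctx_refines_def by auto

lemma ctx_refines_upd:
  "ctx_refines R G' G \<Longrightarrow> R b b \<Longrightarrow> ctx_refines R (G'(x \<mapsto> b)) (G(x \<mapsto> b))"
  unfolding ctx_refines_def by auto

definition ctx_merge :: "('b \<Rightarrow> 'b \<Rightarrow> 'b) \<Rightarrow> ('a \<rightharpoonup> 'b) \<Rightarrow> ('a \<rightharpoonup> 'b) \<Rightarrow> ('a \<rightharpoonup> 'b)" where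
  "ctx_merge f G1 G2 = (\<lambda>y. case G1 y of
       None \<Rightarrow> G2 y
     | Some a \<Rightarrow> (case G2 y of None \<Rightarrow> Some a | Some b \<Rightarrow> Some (f a b)))"

lemma dom_ctx_merge: "dom (ctx_merge f G1 G2) = dom G1 \<union> dom G2"
  unfolding ctx_merge_def by (auto split: option.splits)

lemma ctx_refines_merge1:
  "(\<And>b. R b b) \<Longrightarrow> (\<And>a b. R (f a b) a) \<Longrightarrow> ctx_refines R (ctx_merge f G1 G2) G1"
  unfolding ctx_refines_def ctx_merge_def by (auto split: option.splits)

lemma ctx_refines_merge2:
  "(\<And>b. R b b) \<Longrightarrow> (\<And>a b. R (f a b) b) \<Longrightarrow> ctx_refines R (ctx_merge f G1 G2) G2"
  unfolding ctx_refines_def ctx_merge_def by (auto split: option.splits)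

lemma finite_fvars: "finite (fvars M)"
  by (induction M) auto

lemma finite_fnames: "finite (fnames M)"
  by (induction M) auto

lemma wf_judg_AppD: "wf_judg G (App M N) D \<Longrightarrow> wf_judg G M D \<and> wf_judg G N D"
  unfolding wf_judg_def by auto

lemma wf_judg_Lam_body: "x \<notin> bvars M \<Longrightarrow> wf_judg G (Lam x M) D \<Longrightarrow> wf_judg (G(x \<mapsto> d)) M D"
  unfolding wf_judg_def by auto

lemma wf_judg_Mu_body: "a \<notin> bnames M \<Longrightarrow> wf_judg G (Mu a b M) D \<Longrightarrow> wf_judg G M (D(a \<mapsto> k))"
  unfolding wf_judg_def by auto

lemma wf_judg_if_free:
  "dom G \<subseteq> fvars M \<Longrightarrow> dom D \<subseteq> fnames M \<Longrightarrow> var_convention M \<Longrightarrow> wf_judg G M D"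
  unfolding wf_judg_def var_convention_def
  using finite_subset[OF _ finite_fvars] finite_subset[OF _ finite_fnames] by blast

lemma typing_wf_judg: "typing G M d D \<Longrightarrow> wf_judg G M D"
  by (induction rule: typing.induct) auto

lemma typing_ctx_mono:
  "typing G M d D \<Longrightarrow> ctx_refines leD G' G \<Longrightarrow> ctx_refines leC D' D \<Longrightarrow> wf_judg G' M D'
   \<Longrightarrow> typing G' M d D'"
proof (induction arbitrary: G' D' rule: typing.induct)
  case (ty_ax G x d D)
  then obtain d' where "G' x = Some d'" "leD d' d"
    unfolding ctx_refines_def by blast
  with ty_ax.prems(3) show ?case
    by (meson typing.ty_ax typing.ty_le)
next
  case (ty_abs x G d M k D)
  have "x \<notin> bvars M"
    using typing_wf_judg[OF ty_abs.hyps(2)] unfolding wf_judg_def by auto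
  then have "wf_judg (G'(x \<mapsto> d)) M D'"
    using ty_abs.prems(3) by (rule wf_judg_Lam_body)
  moreover have "x \<notin> dom G'"
    using ty_abs.prems(3) unfolding wf_judg_def by auto
  ultimately show ?case
    using ty_abs by (metis typing.ty_abs ctx_refines_upd leD_refl)
next
  case (ty_absW x G d M D)
  have "x \<notin> bvars M"
    using typing_wf_judg[OF ty_absW.hyps(2)] unfolding wf_judg_def by auto
  then have "wf_judg (G'(x \<mapsto> d)) M D'"
    using ty_absW.prems(3) by (rule wf_judg_Lam_body)
  moreover have "x \<notin> dom G'"
    using ty_absW.prems(3) unfolding wf_judg_def by auto
  ultimately show ?case
    using ty_absW by (metis typing.ty_absW ctx_refines_upd leD_refl)
next
  case (ty_app G M d k D N)
  then show ?case
    by (meson typing.ty_app wf_judg_AppD)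
next
  case (ty_appW G M d D N)
  then show ?case
    by (meson typing.ty_appW wf_judg_AppD)
next
  case (ty_mu \<beta> \<alpha> D k' G M k)
  obtain k'' where k'': "D' \<beta> = Some k''" "leC k'' k'"
    using ty_mu.prems(2) ty_mu.hyps(3) unfolding ctx_refines_def by blast
  have "\<alpha> \<notin> bnames M"
    using typing_wf_judg[OF ty_mu.hyps(4)] unfolding wf_judg_def by auto
  then have wf: "wf_judg G' M (D'(\<alpha> \<mapsto> k))"
    using ty_mu.prems(3) by (rule wf_judg_Mu_body)
  then have "typing G' M (Arr k') (D'(\<alpha> \<mapsto> k))"
    using ty_mu by (metis ctx_refines_upd leC_refl)
  then have "typing G' M (Arr k'') (D'(\<alpha> \<mapsto> k))"
    using wf k''(2) by (meson typing.ty_le leD_arr)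
  moreover have "\<alpha> \<notin> dom D'"
    using ty_mu.prems(3) unfolding wf_judg_def by auto
  ultimately show ?case
    using ty_mu.hyps(1) k''(1) ty_mu.prems(3) by (blast intro: typing.ty_mu)
next
  case (ty_mu_same \<alpha> D G M k)
  have "\<alpha> \<notin> bnames M"
    using typing_wf_judg[OF ty_mu_same.hyps(2)] unfolding wf_judg_def by auto
  then have "wf_judg G' M (D'(\<alpha> \<mapsto> k))"
    using ty_mu_same.prems(3) by (rule wf_judg_Mu_body)
  moreover have "\<alpha> \<notin> dom D'"
    using ty_mu_same.prems(3) unfolding wf_judg_def by auto
  ultimately show ?case
    using ty_mu_same by (metis typing.ty_mu_same ctx_refines_upd leC_refl)
next
  case (ty_le G M d D d')
  then show ?case by (meson typing.ty_le)
next
  case (ty_and G M d D d')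
  then show ?case by (meson typing.ty_and)
qed

lemma var_convention_AppD: "var_convention (App M N) \<Longrightarrow> var_convention M \<and> var_convention N"
  unfolding var_convention_def by auto

lemma var_convention_foldl_AppD:
  "var_convention (foldl App M Ns) \<Longrightarrow> var_convention M \<and> (\<forall>N \<in> set Ns. var_convention N)"
proof (induction Ns arbitrary: M)
  case (Cons N Ns)
  have "var_convention (App M N) \<and> (\<forall>N' \<in> set Ns. var_convention N')"
    using Cons.prems by (intro Cons.IH) simp
  then show ?case
    using var_convention_AppD by auto
qed simp

lemma var_convention_LamD: "var_convention (Lam x M) \<Longrightarrow> var_convention M \<and> x \<notin> bvars M"
  unfolding var_convention_def by auto

lemma var_convention_MuD: "var_convention (Mu a b M) \<Longrightarrow> var_convention M \<and> a \<notin> bnames M"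
  unfolding var_convention_def by auto

definition free_typable :: "('v, 'n) trm \<Rightarrow> dtype \<Rightarrow> bool" where
  "free_typable M d \<longleftrightarrow>
     (\<exists>G D. typing G M d D \<and> dom G \<subseteq> fvars M \<and> dom D \<subseteq> fnames M)"

lemma free_typable_Var: "free_typable (Var x) d"
proof -
  have "wf_judg [x \<mapsto> d] (Var x) Map.empty"
    by (rule wf_judg_if_free) (auto simp: var_convention_def)
  then have "typing [x \<mapsto> d] (Var x) d Map.empty"
    by (intro typing.ty_ax) simp_all
  then show ?thesis
    unfolding free_typable_def by (intro exI[of _ "[x \<mapsto> d]"] exI[of _ Map.empty]) simp
qed

lemma free_typable_App:
  assumes vc: "var_convention (App M N)"
    and "free_typable M (Arr (Prod d k))" and "free_typable N d"
  shows "free_typable (App M N) (Arr k)"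
proof -
  obtain G1 D1 where M: "typing G1 M (Arr (Prod d k)) D1" "dom G1 \<subseteq> fvars M" "dom D1 \<subseteq> fnames M"
    using assms(2) unfolding free_typable_def by blast
  obtain G2 D2 where N: "typing G2 N d D2" "dom G2 \<subseteq> fvars N" "dom D2 \<subseteq> fnames N"
    using assms(3) unfolding free_typable_def by blast
  define G where "G = ctx_merge DAnd G1 G2"
  define D where "D = ctx_merge CAnd D1 D2"
  have dom: "dom G \<subseteq> fvars (App M N)" "dom D \<subseteq> fnames (App M N)"
    using M N unfolding G_def D_def dom_ctx_merge by auto
  then have wf: "wf_judg G (App M N) D"
    using vc by (rule wf_judg_if_free)
  have wf_parts: "wf_judg G M D" "wf_judg G N D"
    using wf_judg_AppD[OF wf] by simp_all
  have "ctx_refines leD G G1" "ctx_refines leC D D1"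
    unfolding G_def D_def
    by (simp_all add: ctx_refines_merge1 leD_refl leD_and1 leC_refl leC_and1)
  then have "typing G M (Arr (Prod d k)) D"
    using M(1) wf_parts(1) by (blast intro: typing_ctx_mono)
  moreover have "ctx_refines leD G G2" "ctx_refines leC D D2"
    unfolding G_def D_def
    by (simp_all add: ctx_refines_merge2 leD_refl leD_and2 leC_refl leC_and2)
  then have "typing G N d D"
    using N(1) wf_parts(2) by (blast intro: typing_ctx_mono)
  ultimately have "typing G (App M N) (Arr k) D"
    using wf by (rule typing.ty_app)
  with dom show ?thesis
    unfolding free_typable_def by blast
qed

lemma free_typable_head:
  assumes "var_convention (foldl App (Var x) Ns)"
    and "\<forall>N \<in> set Ns. \<exists>k. free_typable N (Arr k)"
  shows "free_typable (foldl App (Var x) Ns) (Arr k)"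
  using assms
proof (induction Ns arbitrary: k rule: rev_induct)
  case Nil
  show ?case by (simp add: free_typable_Var)
next
  case (snoc N Ns)
  have vc: "var_convention (App (foldl App (Var x) Ns) N)"
    using snoc.prems(1) by simp
  obtain k' where "free_typable N (Arr k')"
    using snoc.prems(2) by auto
  moreover have "free_typable (foldl App (Var x) Ns) (Arr (Prod (Arr k') k))"
    using var_convention_AppD[OF vc] snoc.prems(2) by (intro snoc.IH) auto
  ultimately show ?case
    using free_typable_App[OF vc] by simp
qed

lemma free_typable_Lam:
  assumes vc: "var_convention (Lam x N)" and "free_typable N (Arr k)"
  shows "\<exists>d. free_typable (Lam x N) (Arr (Prod d k))"
proof -
  obtain G D where N: "typing G N (Arr k) D" "dom G \<subseteq> fvars N" "dom D \<subseteq> fnames N"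
    using assms(2) unfolding free_typable_def by blast
  define d where "d = (case G x of None \<Rightarrow> Nu | Some c \<Rightarrow> c)"
  define G0 where "G0 = G(x := None)"
  have dom: "dom G0 \<subseteq> fvars (Lam x N)" "dom D \<subseteq> fnames (Lam x N)"
    using N unfolding G0_def by auto
  then have wf: "wf_judg G0 (Lam x N) D"
    using vc by (rule wf_judg_if_free)
  have "ctx_refines leD (G0(x \<mapsto> d)) G"
    unfolding ctx_refines_def G0_def d_def by (auto intro: leD_refl)
  then have "typing (G0(x \<mapsto> d)) N (Arr k) D"
    using typing_ctx_mono[OF N(1)] wf_judg_Lam_body[OF _ wf] var_convention_LamD[OF vc]
    by (meson ctx_refines_refl leC_refl)
  then have "typing G0 (Lam x N) (Arr (Prod d k)) D"
    using wf unfolding G0_def by (auto intro: typing.ty_abs)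
  with dom show ?thesis
    unfolding free_typable_def by blast
qed

text \<open>In both \<open>\<mu>\<close>-cases the name \<open>\<beta>\<close> is given the type \<open>\<kappa> \<and> \<kappa>\<^sub>\<beta>\<close>, which refines its
  old type \<open>\<kappa>\<^sub>\<beta>\<close> and, by contravariance of the arrow, is still a type of the body.\<close>

lemma free_typable_Mu_same:
  assumes vc: "var_convention (Mu a a N)" and "free_typable N (Arr k)"
  shows "\<exists>k'. free_typable (Mu a a N) (Arr k')"
proof -
  obtain G D where N: "typing G N (Arr k) D" "dom G \<subseteq> fvars N" "dom D \<subseteq> fnames N"
    using assms(2) unfolding free_typable_def by blast
  define K where "K = (case D a of None \<Rightarrow> k | Some c \<Rightarrow> CAnd k c)"
  define D0 where "D0 = D(a := None)"
  have dom: "dom G \<subseteq> fvars (Mu a a N)" "dom D0 \<subseteq> fnames (Mu a a N)"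
    using N unfolding D0_def by auto
  then have wf: "wf_judg G (Mu a a N) D0"
    using vc by (rule wf_judg_if_free)
  then have wf_body: "wf_judg G N (D0(a \<mapsto> K))"
    using var_convention_MuD[OF vc] by (blast intro: wf_judg_Mu_body)
  have "ctx_refines leC (D0(a \<mapsto> K)) D"
    unfolding ctx_refines_def D0_def K_def by (auto intro: leC_refl leC_and2)
  then have "typing G N (Arr k) (D0(a \<mapsto> K))"
    using typing_ctx_mono[OF N(1)] wf_body by (meson ctx_refines_refl leD_refl)
  moreover have "leD (Arr k) (Arr K)"
    unfolding K_def by (auto split: option.splits intro: leD_arr leC_refl leC_and1)
  ultimately have "typing G N (Arr K) (D0(a \<mapsto> K))"
    using wf_body by (rule typing.ty_le)
  then have "typing G (Mu a a N) (Arr K) D0"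
    using wf unfolding D0_def by (auto intro: typing.ty_mu_same)
  with dom show ?thesis
    unfolding free_typable_def by blast
qed

lemma free_typable_Mu:
  assumes vc: "var_convention (Mu a b N)" and "a \<noteq> b" and "free_typable N (Arr k)"
  shows "\<exists>k'. free_typable (Mu a b N) (Arr k')"
proof -
  obtain G D where N: "typing G N (Arr k) D" "dom G \<subseteq> fvars N" "dom D \<subseteq> fnames N"
    using assms(3) unfolding free_typable_def by blast
  define K where "K = (case D b of None \<Rightarrow> k | Some c \<Rightarrow> CAnd k c)"
  define ka where "ka = (case D a of None \<Rightarrow> k | Some c \<Rightarrow> c)"
  define D0 where "D0 = (D(a := None))(b \<mapsto> K)"
  have dom: "dom G \<subseteq> fvars (Mu a b N)" "dom D0 \<subseteq> fnames (Mu a b N)"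
    using N \<open>a \<noteq> b\<close> unfolding D0_def by auto
  then have wf: "wf_judg G (Mu a b N) D0"
    using vc by (rule wf_judg_if_free)
  then have wf_body: "wf_judg G N (D0(a \<mapsto> ka))"
    using var_convention_MuD[OF vc] by (blast intro: wf_judg_Mu_body)
  have "ctx_refines leC (D0(a \<mapsto> ka)) D"
    unfolding ctx_refines_def D0_def K_def ka_def using \<open>a \<noteq> b\<close>
    by (auto intro: leC_refl leC_and2)
  then have "typing G N (Arr k) (D0(a \<mapsto> ka))"
    using typing_ctx_mono[OF N(1)] wf_body by (meson ctx_refines_refl leD_refl)
  moreover have "leD (Arr k) (Arr K)"
    unfolding K_def by (auto split: option.splits intro: leD_arr leC_refl leC_and1)
  ultimately have "typing G N (Arr K) (D0(a \<mapsto> ka))"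
    using wf_body by (rule typing.ty_le)
  moreover have "a \<notin> dom D0" "D0 b = Some K"
    unfolding D0_def using \<open>a \<noteq> b\<close> by auto
  ultimately have "typing G (Mu a b N) (Arr ka) D0"
    using \<open>a \<noteq> b\<close> wf by (auto intro: typing.ty_mu)
  with dom show ?thesis
    unfolding free_typable_def by blast
qed

lemma normal_form_free_typable:
  "normal_form N \<Longrightarrow> var_convention N \<Longrightarrow> \<exists>k. free_typable N (Arr k)"
proof (induction rule: normal_form.induct)
  case (nf_head Ns x)
  then have "free_typable (foldl App (Var x) Ns) (Arr (ProdW Nu))"
    by (intro free_typable_head) (auto dest: var_convention_foldl_AppD)
  then show ?case ..
next
  case (nf_lam N x)
  then obtain k where "free_typable N (Arr k)"
    by (auto dest: var_convention_LamD)
  with nf_lam.prems show ?case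
    by (blast dest: free_typable_Lam)
next
  case (nf_mu N a b)
  then obtain k where k: "free_typable N (Arr k)"
    by (auto dest: var_convention_MuD)
  show ?case
  proof (cases "a = b")
    case True
    with nf_mu.prems k show ?thesis
      using free_typable_Mu_same by simp
  next
    case False
    show ?thesis
      using nf_mu.prems False k by (rule free_typable_Mu)
  qed
qed

theorem mainTheorem12:
  fixes N :: "('v, 'n) trm"
  assumes "normal_form N" and "var_convention N"
  shows "\<exists>(\<Gamma> :: 'v basis) (\<Delta> :: 'n namectx) (k :: ctype). typing \<Gamma> N (Arr k) \<Delta>"
  using normal_form_free_typable[OF assms] unfolding free_typable_def by blast

end
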